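(* Let $n\ge2$, $a\ge\sqrt{n-1}$, $f(x)=a|x^{(1)}|+\sum_{i=2}^n x^{(i)}$ on $\mathbb{R}^n$, and $0<c_1<c_2<1$; let $\tau=c_1+\frac{(n-1)(c_1-1)}{a^2}$. Let $x_k\in\mathbb{R}^n$ with $x_k^{(1)}\ne0$, $d_k=-\nabla f(x_k)$, and $t_k\in\mathbb{R}$. Suppose $W(t_k)$ holds. Then $A(t_k)$ holds if and only if $$(1+\tau)\frac{at_k}{2}\le |x_k^{(1)}|.$$
   Context: $x^{(i)}$ is the $i$-th coordinate. The Armijo condition is $A(t)$: $f(x_k+td_k)\le f(x_k)+c_1t\nabla f(x_k)^Td_k$; the Wolfe condition is $W(t)$: $f$ is differentiable at $x_k+td_k$ and $\nabla f(x_k+td_k)^Td_k\ge c_2\nabla f(x_k)^Td_k$. *)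

theory Defs
  imports "HOL-Analysis.Analysis"
begin

text \<open>Gradient of a real-valued function on a real inner product space
  (meaningful where the function is differentiable).\<close>
definition grad :: "('a::real_inner \<Rightarrow> real) \<Rightarrow> 'a \<Rightarrow> 'a" where
  "grad f x = (THE D. GDERIV f x :> D)"

definition armijo :: "('a::real_inner \<Rightarrow> real) \<Rightarrow> real \<Rightarrow> 'a \<Rightarrow> 'a \<Rightarrow> real \<Rightarrow> bool" where
  "armijo f c1 x d t \<longleftrightarrow> f (x + t *\<^sub>R d) \<le> f x + c1 * t * (grad f x \<bullet> d)"

definition wolfe :: "('a::real_inner \<Rightarrow> real) \<Rightarrow> real \<Rightarrow> 'a \<Rightarrow> 'a \<Rightarrow> real \<Rightarrow> bool" where
  "wolfe f c2 x d t \<longleftrightarrow> f differentiable (at (x + t *\<^sub>R d)) \<and>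
     grad f (x + t *\<^sub>R d) \<bullet> d \<ge> c2 * (grad f x \<bullet> d)"

end

theory Submission
  imports Defs
begin

text \<open>Along \<open>d = -\<nabla>f(x)\<close> the kink coordinate \<open>y\<^sub>1\<close> moves towards \<open>0\<close> at speed \<open>a\<close>. The Wolfe
  condition needs differentiability at \<open>x + t d\<close>, so that coordinate is not \<open>0\<close> there; had it
  kept its sign, the gradient would be unchanged and the curvature condition would read
  \<open>-(a\<^sup>2 + n - 1) \<ge> -c\<^sub>2 (a\<^sup>2 + n - 1)\<close>, impossible for \<open>c\<^sub>2 < 1\<close>. Hence the step overshoots the
  kink, \<open>|(x + t d)\<^sub>1| = a t - |x\<^sub>1|\<close>, and the Armijo condition becomes a linear inequality
  in \<open>t\<close>, which is the claimed one after dividing by \<open>2a\<close>.\<close>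

definition kink_fun :: "real \<Rightarrow> 'n \<Rightarrow> real ^ 'n \<Rightarrow> real" where
  "kink_fun a k y = a * \<bar>y $ k\<bar> + (\<Sum>i\<in>UNIV - {k}. y $ i)"

definition kink_grad :: "real \<Rightarrow> 'n \<Rightarrow> real \<Rightarrow> real ^ 'n" where
  "kink_grad a k s = (\<chi> i. if i = k then a * s else 1)"

lemma grad_eqI:
  assumes "GDERIV f y :> D"
  shows "grad f y = D"
  unfolding grad_def
proof (rule the_equality)
  show "GDERIV f y :> D" by (rule assms)
  fix D' assume "GDERIV f y :> D'"
  hence "(\<lambda>h. h \<bullet> D') = (\<lambda>h. h \<bullet> D)"
    using assms unfolding gderiv_def by (metis has_derivative_unique)
  hence "(D' - D) \<bullet> D' = (D' - D) \<bullet> D" by metis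
  hence "(D' - D) \<bullet> (D' - D) = 0" by (simp add: inner_diff_right)
  thus "D' = D" by simp
qed

lemma inner_vec_remove:
  fixes g w :: "real ^ 'n"
  shows "g \<bullet> w = g $ k * w $ k + (\<Sum>i\<in>UNIV - {k}. g $ i * w $ i)"
  unfolding inner_vec_def by (simp add: sum.remove[of UNIV k])

lemma card_UNIV_remove: "real (card (UNIV - {k :: 'n :: finite})) = real CARD('n) - 1"
  by (simp add: card_Diff_singleton of_nat_diff)

lemma inner_kink_grad:
  "kink_grad a k s \<bullet> kink_grad a k s' = a\<^sup>2 * s * s' + (real CARD('n) - 1)"
  for k :: "'n :: finite"
  unfolding inner_vec_remove[of _ _ k] kink_grad_def
  by (simp add: card_UNIV_remove power2_eq_square algebra_simps)

lemma grad_kink_fun: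
  fixes y :: "real ^ 'n"
  assumes "y $ k \<noteq> 0"
  shows "grad (kink_fun a k) y = kink_grad a k (sgn (y $ k))"
proof (rule grad_eqI)
  let ?g = "kink_grad a k (sgn (y $ k))"
  let ?U = "{w :: real ^ 'n. 0 < w $ k * y $ k}"
  have "((\<lambda>w. w \<bullet> ?g) has_derivative (\<lambda>h. h \<bullet> ?g)) (at y)"
    by (intro bounded_linear_imp_has_derivative bounded_linear_inner_left)
  moreover have "open ?U"
    by (intro open_Collect_less continuous_intros)
  moreover have "y \<in> ?U"
    using assms by (auto simp: zero_less_mult_iff linorder_neq_iff)
  moreover have "w \<bullet> ?g = kink_fun a k w" if "w \<in> ?U" for w
  proof -
    have "sgn (y $ k) * w $ k = \<bar>w $ k\<bar>"
      using that by (cases "y $ k > 0") (auto simp: zero_less_mult_iff)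
    thus ?thesis
      unfolding inner_vec_remove[of w _ k] by (simp add: kink_fun_def kink_grad_def algebra_simps)
  qed
  ultimately show "GDERIV (kink_fun a k) y :> ?g"
    unfolding gderiv_def by (rule has_derivative_transform_within_open)
qed

text \<open>Restricted to the line through \<open>z\<close> in direction of the \<open>k\<close>-th axis, \<open>kink_fun a k\<close> is
  \<open>s \<mapsto> a |s| + C\<close>; a derivative \<open>D\<close> there would make \<open>0\<close> a local minimum of both
  \<open>a |s| \<mp> a s\<close>, forcing \<open>D = a\<close> and \<open>D = -a\<close>.\<close>

lemma kink_fun_not_differentiable:
  fixes z :: "real ^ 'n"
  assumes "a > 0" and "z $ k = 0"
  shows "\<not> kink_fun a k differentiable at z"
proof
  assume diff: "kink_fun a k differentiable at z"
  let ?line = "\<lambda>s::real. z + s *\<^sub>R axis k 1"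
  define C where "C = (\<Sum>i\<in>UNIV - {k}. z $ i)"
  have "(kink_fun a k \<circ> ?line) differentiable at 0"
    by (rule differentiable_chain_at) (use diff in \<open>auto intro!: derivative_intros\<close>)
  moreover have "kink_fun a k \<circ> ?line = (\<lambda>s. a * \<bar>s\<bar> + C)"
    by (rule ext) (simp add: assms(2) C_def axis_def kink_fun_def)
  ultimately obtain D where D: "((\<lambda>s. a * \<bar>s\<bar> + C) has_real_derivative D) (at 0)"
    using real_differentiable_def by metis
  have lin: "((\<lambda>s. a * s) has_real_derivative a) (at 0)"
    by (auto intro!: derivative_eq_intros)
  have "D - a = 0"
    using DERIV_diff[OF D lin]
    by (rule DERIV_local_min[of _ _ 0 1])
      (use assms(1) in \<open>auto simp: abs_if mult_nonneg_nonpos\<close>)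
  moreover have "D + a = 0"
    using DERIV_add[OF D lin]
    by (rule DERIV_local_min[of _ _ 0 1]) (use assms(1) in \<open>auto simp: abs_if\<close>)
  ultimately show False
    using assms(1) by simp
qed

lemma wolfe_kink_fun_overshoots:
  fixes x :: "real ^ 'n"
  assumes "a > 0" and "c2 < 1" and "x $ k \<noteq> 0"
    and d: "d = - grad (kink_fun a k) x"
    and W: "wolfe (kink_fun a k) c2 x d t"
  shows "\<bar>(x + t *\<^sub>R d) $ k\<bar> = t * a - \<bar>x $ k\<bar>"
proof -
  define z where "z = x + t *\<^sub>R d"
  define s where "s = sgn (x $ k)"
  have grad_x: "grad (kink_fun a k) x = kink_grad a k s"
    unfolding s_def using assms(3) by (rule grad_kink_fun)
  hence d_eq: "d = - kink_grad a k s"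
    by (simp add: d)
  have z_k: "z $ k = x $ k - t * a * s"
    by (simp add: z_def d_eq kink_grad_def)
  have "z $ k \<noteq> 0"
    using W kink_fun_not_differentiable[OF assms(1), of z] unfolding wolfe_def z_def[symmetric]
    by blast
  have "sgn (z $ k) \<noteq> s"
  proof
    assume same: "sgn (z $ k) = s"
    have "s * s = 1"
      using assms(3) by (simp add: s_def sgn_if)
    moreover have "grad (kink_fun a k) z = kink_grad a k s"
      using \<open>z $ k \<noteq> 0\<close> same by (simp add: grad_kink_fun)
    moreover have "c2 * (grad (kink_fun a k) x \<bullet> d) \<le> grad (kink_fun a k) z \<bullet> d"
      using W unfolding wolfe_def z_def[symmetric] by blast
    ultimately have "- (a\<^sup>2 + (real CARD('n) - 1)) \<ge> c2 * - (a\<^sup>2 + (real CARD('n) - 1))"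
      using grad_x d_eq by (simp add: inner_kink_grad power2_eq_square mult.assoc)
    moreover have "a\<^sup>2 + (real CARD('n) - 1) > 0"
      using assms(1) by (simp add: add_pos_nonneg)
    ultimately show False
      using assms(2) by (simp add: mult_le_cancel_right1)
  qed
  hence "sgn (z $ k) = - s"
    using \<open>z $ k \<noteq> 0\<close> assms(3) by (auto simp: s_def sgn_if split: if_splits)
  thus ?thesis
    using z_k assms(3) \<open>z $ k \<noteq> 0\<close> unfolding z_def[symmetric] s_def
    by (cases "x $ k > 0"; cases "z $ k > 0") (auto simp: sgn_if)
qed

lemma armijo_kink_fun_iff:
  fixes x :: "real ^ 'n"
  assumes "x $ k \<noteq> 0"
    and d: "d = - grad (kink_fun a k) x"
    and overshoot: "\<bar>(x + t *\<^sub>R d) $ k\<bar> = t * a - \<bar>x $ k\<bar>"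
  shows "armijo (kink_fun a k) c1 x d t \<longleftrightarrow>
    t * (a\<^sup>2 * (1 + c1) + (real CARD('n) - 1) * (c1 - 1)) \<le> 2 * a * \<bar>x $ k\<bar>"
proof -
  define s where "s = sgn (x $ k)"
  have grad_x: "grad (kink_fun a k) x = kink_grad a k s"
    unfolding s_def using assms(1) by (rule grad_kink_fun)
  hence d_eq: "d = - kink_grad a k s"
    by (simp add: d)
  have "s * s = 1"
    using assms(1) by (simp add: s_def sgn_if)
  hence slope: "grad (kink_fun a k) x \<bullet> d = - (a\<^sup>2 + (real CARD('n) - 1))"
    using grad_x d_eq by (simp add: inner_kink_grad power2_eq_square mult.assoc)
  have "(\<Sum>i\<in>UNIV - {k}. (x + t *\<^sub>R d) $ i) = (\<Sum>i\<in>UNIV - {k}. x $ i - t)"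
    by (rule sum.cong) (auto simp: d_eq kink_grad_def)
  hence f_step: "kink_fun a k (x + t *\<^sub>R d)
      = a * (t * a - \<bar>x $ k\<bar>) + (\<Sum>i\<in>UNIV - {k}. x $ i) - t * (real CARD('n) - 1)"
    unfolding kink_fun_def overshoot by (simp add: sum_subtractf card_UNIV_remove)
  thus ?thesis
    unfolding armijo_def slope f_step by (simp add: kink_fun_def algebra_simps power2_eq_square)
qed

theorem lemma2:
  fixes a c1 c2 t \<tau> :: real and x :: "real ^ 'n" and i1 :: 'n
    and f :: "real ^ 'n \<Rightarrow> real" and d :: "real ^ 'n"
  assumes n2: "CARD('n) \<ge> 2"
    and ha: "a \<ge> sqrt (real CARD('n) - 1)"
    and hc: "0 < c1" "c1 < c2" "c2 < 1"
    and hf: "f = (\<lambda>y. a * \<bar>y $ i1\<bar> + (\<Sum>i\<in>UNIV - {i1}. y $ i))"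
    and h\<tau>: "\<tau> = c1 + (real CARD('n) - 1) * (c1 - 1) / a\<^sup>2"
    and hx: "x $ i1 \<noteq> 0"
    and hd: "d = - grad f x"
    and hW: "wolfe f c2 x d t"
  shows "armijo f c1 x d t \<longleftrightarrow> (1 + \<tau>) * (a * t / 2) \<le> \<bar>x $ i1\<bar>"
proof -
  have f: "f = kink_fun a i1"
    unfolding hf by (simp add: kink_fun_def fun_eq_iff)
  have "1 \<le> sqrt (real CARD('n) - 1)"
    using n2 by simp
  hence "a > 0"
    using ha by linarith
  have "armijo f c1 x d t \<longleftrightarrow>
      t * (a\<^sup>2 * (1 + c1) + (real CARD('n) - 1) * (c1 - 1)) \<le> 2 * a * \<bar>x $ i1\<bar>"
    using wolfe_kink_fun_overshoots[OF \<open>a > 0\<close> hc(3) hx] armijo_kink_fun_iff[OF hx] hd hW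
    unfolding f by blast
  also have "t * (a\<^sup>2 * (1 + c1) + (real CARD('n) - 1) * (c1 - 1)) = 2 * a * ((1 + \<tau>) * (a * t / 2))"
    unfolding h\<tau> using \<open>a > 0\<close> by (simp add: field_simps power2_eq_square)
  finally show ?thesis
    using \<open>a > 0\<close> by (simp add: mult.commute)
qed

end
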